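(* Let $\varepsilon>0$ and let $(u_n)_{n=1}^\infty$ be a real sequence. Then $(u_n)_{n=1}^\infty$ is $\varepsilon$-approximately subadditive if and only if there exist real sequences $(v_n)_{n=1}^\infty$ and $(w_n)_{n=1}^\infty$ such that $(v_n)$ is subadditive, $0\le w_n\le\varepsilon$ for all $n\in\mathbb{N}$, and $u_n=v_n+w_n$ for all $n\in\mathbb{N}$ (in particular $v_n\le u_n$ for all $n$, i.e. $(v_n)$ is a subadditive minorant of $(u_n)$).
   Context: $\mathbb{N}=\{1,2,3,\dots\}$. For $n\in\mathbb{N}$, a partition of $n$ is a finite list $n_1,\dots,n_k\in\mathbb{N}$ ($k\ge1$) with $n_1+\cdots+n_k=n$. A sequence $(u_n)_{n=1}^\infty$ is called $\varepsilon$-approximately subadditive (for a fixed $\varepsilon>0$) if for every $n\in\mathbb{N}$ and every partition $n_1,\dots,n_k$ of $n$ one has $u_n\le u_{n_1}+\cdots+u_{n_k}+\varepsilon$. It is called subadditive if for every $n\in\mathbb{N}$ and every partition $n_1,\dots,n_k$ of $n$ one has $u_n\le u_{n_1}+\cdots+u_{n_k}$. *)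

theory Defs
  imports Main "HOL.Real"
begin

(* Sequences (u_n)_{n>=1} are modelled as functions nat => real; the value at 0 is ignored.
   A partition of n is a nonempty list of positive naturals summing to n. *)
definition is_partition :: "nat \<Rightarrow> nat list \<Rightarrow> bool" where
  "is_partition n ns \<longleftrightarrow> ns \<noteq> [] \<and> (\<forall>k\<in>set ns. k \<ge> 1) \<and> sum_list ns = n"

definition approx_subadditive :: "real \<Rightarrow> (nat \<Rightarrow> real) \<Rightarrow> bool" where
  "approx_subadditive \<epsilon> u \<longleftrightarrow>
     (\<forall>n\<ge>1. \<forall>ns. is_partition n ns \<longrightarrow> u n \<le> sum_list (map u ns) + \<epsilon>)"

definition subadditive_seq :: "(nat \<Rightarrow> real) \<Rightarrow> bool" where
  "subadditive_seq u \<longleftrightarrow>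
     (\<forall>n\<ge>1. \<forall>ns. is_partition n ns \<longrightarrow> u n \<le> sum_list (map u ns))"

end

theory Submission
  imports Defs
begin

text \<open>
  The subadditive minorant is v n = min of u n_1 + ... + u n_k over all partitions of n;
  the minimum exists because n has finitely many partitions. Splitting each part of a
  partition of n by one of its own optimal partitions yields a partition of n, which makes v
  subadditive. The trivial partition gives v \<le> u, and approximate subadditivity applied to an
  optimal partition gives u \<le> v + \<epsilon>. Conversely, if u = v + w with v subadditive and
  0 \<le> w \<le> \<epsilon>, then u n \<le> v n + \<epsilon> \<le> \<Sum> v n_i + \<epsilon> \<le> \<Sum> u n_i + \<epsilon>.
\<close>

lemma is_partition_singleton: "n \<ge> 1 \<Longrightarrow> is_partition n [n]"
  by (simp add: is_partition_def)

lemma is_partition_length_le: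
  assumes "is_partition n ns"
  shows "length ns \<le> n"
proof -
  have "sum_list (map (\<lambda>_. 1::nat) ns) \<le> sum_list (map (\<lambda>k. k) ns)"
    by (rule sum_list_mono) (use assms in \<open>auto simp: is_partition_def\<close>)
  then show ?thesis
    using assms by (simp add: is_partition_def sum_list_triv)
qed

lemma finite_partitions: "finite {ns. is_partition n ns}"
proof (rule finite_subset)
  show "{ns. is_partition n ns} \<subseteq> {ns. set ns \<subseteq> {1..n} \<and> length ns \<le> n}"
    using member_le_sum_list is_partition_length_le by (fastforce simp: is_partition_def)
  show "finite {ns. set ns \<subseteq> {1..n} \<and> length ns \<le> n}"
    by (rule finite_lists_length_le) simp
qed

lemma is_partition_concat:
  assumes "is_partition n ns" and "\<And>k. k \<in> set ns \<Longrightarrow> is_partition k (f k)"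
  shows "is_partition n (concat (map f ns))"
proof -
  have "sum_list (concat (map f ns)) = sum_list ns"
    using assms(2) by (induction ns) (auto simp: is_partition_def)
  moreover obtain k ks where "ns = k # ks"
    using assms(1) by (cases ns) (auto simp: is_partition_def)
  ultimately show ?thesis
    using assms by (auto simp: is_partition_def)
qed

definition min_partition_sum :: "(nat \<Rightarrow> real) \<Rightarrow> nat \<Rightarrow> real" where
  "min_partition_sum u n = Min ((\<lambda>ns. sum_list (map u ns)) ` {ns. is_partition n ns})"

lemma min_partition_sum_le: "is_partition n ns \<Longrightarrow> min_partition_sum u n \<le> sum_list (map u ns)"
  unfolding min_partition_sum_def by (rule Min_le) (use finite_partitions in auto)

lemma min_partition_sum_le_self: "n \<ge> 1 \<Longrightarrow> min_partition_sum u n \<le> u n"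
  using min_partition_sum_le[OF is_partition_singleton] by simp

lemma min_partition_sum_attained:
  assumes "n \<ge> 1"
  obtains ns where "is_partition n ns" and "min_partition_sum u n = sum_list (map u ns)"
proof -
  have "min_partition_sum u n \<in> (\<lambda>ns. sum_list (map u ns)) ` {ns. is_partition n ns}"
    unfolding min_partition_sum_def
    using finite_partitions is_partition_singleton[OF assms] by (intro Min_in) auto
  then show ?thesis
    using that by blast
qed

lemma subadditive_min_partition_sum: "subadditive_seq (min_partition_sum u)"
  unfolding subadditive_seq_def
proof (intro allI impI)
  fix n ns assume "n \<ge> 1" and ns: "is_partition n ns"
  define opt where
    "opt k = (SOME qs. is_partition k qs \<and> min_partition_sum u k = sum_list (map u qs))" for k
  have opt: "is_partition k (opt k)" "min_partition_sum u k = sum_list (map u (opt k))"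
    if "k \<in> set ns" for k
  proof -
    have "k \<ge> 1"
      using ns that by (auto simp: is_partition_def)
    then show "is_partition k (opt k)" "min_partition_sum u k = sum_list (map u (opt k))"
      unfolding opt_def by (metis (mono_tags, lifting) min_partition_sum_attained someI)+
  qed
  have "min_partition_sum u n \<le> sum_list (map u (concat (map opt ns)))"
    using ns opt(1) by (intro min_partition_sum_le is_partition_concat)
  also have "\<dots> = sum_list (map (min_partition_sum u) ns)"
    using opt(2) by (induction ns) auto
  finally show "min_partition_sum u n \<le> sum_list (map (min_partition_sum u) ns)" .
qed

lemma approx_subadditive_iff_le_min_partition_sum:
  "approx_subadditive \<epsilon> u \<longleftrightarrow> (\<forall>n\<ge>1. u n \<le> min_partition_sum u n + \<epsilon>)"
proof
  assume u: "approx_subadditive \<epsilon> u"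
  show "\<forall>n\<ge>1. u n \<le> min_partition_sum u n + \<epsilon>"
  proof (intro allI impI)
    fix n :: nat assume "n \<ge> 1"
    then obtain ns where "is_partition n ns" "min_partition_sum u n = sum_list (map u ns)"
      by (rule min_partition_sum_attained)
    with \<open>n \<ge> 1\<close> u show "u n \<le> min_partition_sum u n + \<epsilon>"
      by (simp add: approx_subadditive_def)
  qed
next
  assume "\<forall>n\<ge>1. u n \<le> min_partition_sum u n + \<epsilon>"
  then show "approx_subadditive \<epsilon> u"
    unfolding approx_subadditive_def by (smt (verit) min_partition_sum_le)
qed

lemma approx_subadditive_add_bounded:
  assumes "subadditive_seq v" and "\<And>n. n \<ge> 1 \<Longrightarrow> 0 \<le> w n \<and> w n \<le> \<epsilon>"
    and "\<And>n. n \<ge> 1 \<Longrightarrow> u n = v n + w n"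
  shows "approx_subadditive \<epsilon> u"
  unfolding approx_subadditive_def
proof (intro allI impI)
  fix n ns assume n: "n \<ge> 1" and ns: "is_partition n ns"
  have "u n \<le> v n + \<epsilon>"
    using assms(2,3) n by force
  also have "v n \<le> sum_list (map v ns)"
    using assms(1) n ns by (simp add: subadditive_seq_def)
  also have "sum_list (map v ns) \<le> sum_list (map u ns)"
    using assms(2,3) ns by (intro sum_list_mono) (auto simp: is_partition_def)
  finally show "u n \<le> sum_list (map u ns) + \<epsilon>"
    by simp
qed

theorem proposition2:
  fixes \<epsilon> :: real and u :: "nat \<Rightarrow> real"
  assumes "\<epsilon> > 0"
  shows "approx_subadditive \<epsilon> u \<longleftrightarrow>
    (\<exists>v w :: nat \<Rightarrow> real. subadditive_seq v \<and>
       (\<forall>n\<ge>1. 0 \<le> w n \<and> w n \<le> \<epsilon>) \<and>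
       (\<forall>n\<ge>1. u n = v n + w n))"
proof
  assume "approx_subadditive \<epsilon> u"
  then have "\<forall>n\<ge>1. 0 \<le> u n - min_partition_sum u n \<and> u n - min_partition_sum u n \<le> \<epsilon>"
    using min_partition_sum_le_self approx_subadditive_iff_le_min_partition_sum by fastforce
  with subadditive_min_partition_sum
  show "\<exists>v w. subadditive_seq v \<and> (\<forall>n\<ge>1. 0 \<le> w n \<and> w n \<le> \<epsilon>) \<and> (\<forall>n\<ge>1. u n = v n + w n)"
    by (intro exI[of _ "min_partition_sum u"] exI[of _ "\<lambda>n. u n - min_partition_sum u n"]) auto
next
  assume "\<exists>v w. subadditive_seq v \<and> (\<forall>n\<ge>1. 0 \<le> w n \<and> w n \<le> \<epsilon>) \<and> (\<forall>n\<ge>1. u n = v n + w n)"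
  then show "approx_subadditive \<epsilon> u"
    using approx_subadditive_add_bounded by metis
qed

end
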